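(* Let $1\le k\le n$ and $1\le m<n$ be integers. Let $\mathcal{C}=\{d_1,\dots,d_n\}$ be a corpus of $n$ items of which exactly $m$ are designated useful (set $\mathcal{C}^+$) and the remaining $n-m$ non-useful (set $\mathcal{C}^-$). Define $\mathrm{MU}(i)=\mathbb{1}[i\le k]$ for ranks $i\in\{1,\dots,n\}$. Let $\pi$ be any probability distribution over the set $S_n$ of rankings (permutations) of $\mathcal{C}$, and let $\epsilon\in\mathbb{R}^n$ be its expected exposure vector, $\epsilon_d=\sum_{\sigma\in S_n}\pi(\sigma)\,\mathrm{MU}(\bar\sigma_d)$, where $\bar\sigma_d$ is the rank of $d$ in $\sigma$. Define the target exposure vector $\epsilon^*\in\mathbb{R}^n$ by: for useful $d\in\mathcal{C}^+$, $\epsilon^*_d=1$ if $m\le k$ and $\epsilon^*_d=k/m$ if $m>k$; for non-useful $d\in\mathcal{C}^-$, $\epsilon^*_d=\frac{k-m}{n-m}$ if $m\le k$ and $\epsilon^*_d=0$ if $m>k$. Then $$\langle \epsilon,\epsilon^*\rangle\in\big[0,\ \|\epsilon^*\|_2^2\big].$$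
   Context: $\epsilon^*$ is the expected exposure of items under an oracle stochastic retriever that always ranks all useful items above all non-useful items, uniformly at random within each group, under the top-$k$ machine-user browsing model. The quantity $\langle\epsilon,\epsilon^*\rangle$ is called the expected exposure relevance (EE-R) of the policy $\pi$. *)

theory Defs
  imports Complex_Main "HOL-Combinatorics.Permutations"
begin

text \<open>Items are d_1,...,d_n, identified with 1..n. A ranking sigma is a permutation of
  {1..n}; sigma d is the rank of item d.\<close>

definition MU :: "nat \<Rightarrow> nat \<Rightarrow> real" where
  "MU k i = (if i \<le> k then 1 else 0)"

definition rankings :: "nat \<Rightarrow> (nat \<Rightarrow> nat) set" where
  "rankings n = {\<sigma>. \<sigma> permutes {1..n}}"

definition expected_exposure :: "nat \<Rightarrow> nat \<Rightarrow> ((nat \<Rightarrow> nat) \<Rightarrow> real) \<Rightarrow> nat \<Rightarrow> real" where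
  "expected_exposure n k \<pi> d = (\<Sum>\<sigma>\<in>rankings n. \<pi> \<sigma> * MU k (\<sigma> d))"

definition target_exposure :: "nat \<Rightarrow> nat \<Rightarrow> nat set \<Rightarrow> nat \<Rightarrow> real" where
  "target_exposure n k U d =
     (let m = card U in
      if d \<in> U then (if m \<le> k then 1 else real k / real m)
      else (if m \<le> k then (real k - real m) / (real n - real m) else 0))"

end

theory Submission
  imports Defs "HOL-Analysis.Convex"
begin

text \<open>A deterministic ranking exposes exactly k items, and the useful items among them number
  at most min k m. For such a k-set the gain against the target is maximised by taking as
  many useful items as possible, and then it equals the squared norm of the target. The
  expected exposure of a stochastic ranking is a convex combination of deterministic ones,
  so its inner product with the target also lies in the interval between 0 and that norm.\<close>

definition target_useful :: "nat \<Rightarrow> nat \<Rightarrow> real" where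
  "target_useful k m = (if m \<le> k then 1 else real k / real m)"

definition target_nonuseful :: "nat \<Rightarrow> nat \<Rightarrow> nat \<Rightarrow> real" where
  "target_nonuseful n k m = (if m \<le> k then (real k - real m) / (real n - real m) else 0)"

lemma target_exposure_eq:
  "target_exposure n k U d =
     (if d \<in> U then target_useful k (card U) else target_nonuseful n k (card U))"
  by (simp add: target_exposure_def target_useful_def target_nonuseful_def Let_def)

lemma target_exposure_nonneg:
  assumes "card U < n"
  shows "0 \<le> target_exposure n k U d"
  using assms by (simp add: target_exposure_eq target_useful_def target_nonuseful_def)

lemma sum_target_exposure:
  assumes "finite A"
  shows "(\<Sum>d\<in>A. f (target_exposure n k U d)) =
           real (card (A \<inter> U)) * f (target_useful k (card U))
         + real (card (A - U)) * f (target_nonuseful n k (card U))"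
proof -
  have "(\<Sum>d\<in>A. f (target_exposure n k U d)) =
          (\<Sum>d\<in>A. if d \<in> U then f (target_useful k (card U)) else f (target_nonuseful n k (card U)))"
    by (simp add: target_exposure_eq if_distrib)
  also have "\<dots> = real (card (A \<inter> U)) * f (target_useful k (card U))
                 + real (card (A - U)) * f (target_nonuseful n k (card U))"
    using assms by (simp add: sum.If_cases Diff_eq)
  finally show ?thesis .
qed

text \<open>Here a is the number of useful items among the k exposed ones.\<close>

lemma target_gain_le_target_norm:
  assumes "k \<le> n" "m < n" "a \<le> m" "a \<le> k"
  shows "real a * target_useful k m + real (k - a) * target_nonuseful n k m
           \<le> real m * (target_useful k m)\<^sup>2 + real (n - m) * (target_nonuseful n k m)\<^sup>2"
proof (cases "m \<le> k")
  case True
  define c where "c = target_nonuseful n k m"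
  have c: "(real n - real m) * c = real k - real m" "c \<le> 1"
    using True assms by (simp_all add: c_def target_nonuseful_def field_simps)
  have "real a + (real k - real a) * c \<le> real m + (real k - real m) * c"
    using \<open>a \<le> m\<close> c(2) mult_nonneg_nonneg[of "real m - real a" "1 - c"]
    by (simp add: algebra_simps)
  also have "\<dots> = real m + (real n - real m) * c\<^sup>2"
    using c(1) by (simp add: power2_eq_square mult.assoc[symmetric])
  finally show ?thesis
    using True assms by (simp add: c_def target_useful_def)
next
  case False
  have "real a * (real k / real m) \<le> real k * (real k / real m)"
    using \<open>a \<le> k\<close> by (intro mult_right_mono) auto
  also have "\<dots> = real m * (real k / real m)\<^sup>2"
    using False by (simp add: power2_eq_square)
  finally show ?thesis
    using False by (simp add: target_useful_def target_nonuseful_def)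
qed

lemma sum_target_exposure_bounds:
  assumes "U \<subseteq> {1..n}" "card U < n" "A \<subseteq> {1..n}" "card A = k"
  shows "0 \<le> (\<Sum>d\<in>A. target_exposure n k U d)
       \<and> (\<Sum>d\<in>A. target_exposure n k U d) \<le> (\<Sum>d\<in>{1..n}. (target_exposure n k U d)\<^sup>2)"
proof
  have fin: "finite A" "finite U"
    using assms(1,3) finite_subset by auto
  show "0 \<le> (\<Sum>d\<in>A. target_exposure n k U d)"
    using assms(2) by (intro sum_nonneg target_exposure_nonneg)
  define a where "a = card (A \<inter> U)"
  have "a \<le> card U" "a \<le> k" "card (A - U) = k - a"
    using fin assms(4) by (auto simp: a_def card_mono card_Diff_subset_Int)
  moreover have "k \<le> n"
    using assms(3,4) card_mono[of "{1..n}" A] by simp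
  moreover have "card ({1..n} \<inter> U) = card U" "card ({1..n} - U) = n - card U"
    using assms(1) fin by (simp_all add: Int_absorb1 card_Diff_subset)
  ultimately show "(\<Sum>d\<in>A. target_exposure n k U d) \<le> (\<Sum>d\<in>{1..n}. (target_exposure n k U d)\<^sup>2)"
    using fin assms(2) target_gain_le_target_norm[of k n "card U" a]
    by (simp add: a_def sum_target_exposure[where f = "\<lambda>x. x"] sum_target_exposure[where f = power2])
qed

definition exposed_items :: "nat \<Rightarrow> nat \<Rightarrow> (nat \<Rightarrow> nat) \<Rightarrow> nat set" where
  "exposed_items n k \<sigma> = {d\<in>{1..n}. \<sigma> d \<le> k}"

lemma exposed_items_subset: "exposed_items n k \<sigma> \<subseteq> {1..n}"
  by (auto simp: exposed_items_def)

lemma card_exposed_items: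
  assumes "\<sigma> permutes {1..n}" "k \<le> n"
  shows "card (exposed_items n k \<sigma>) = k"
proof -
  have "\<sigma> d \<in> {1..n} \<longleftrightarrow> d \<in> {1..n}" for d
    using assms(1) by (rule permutes_in_image)
  then have "exposed_items n k \<sigma> = \<sigma> -` {1..k}"
    using assms(2) by (fastforce simp: exposed_items_def)
  moreover have "bij \<sigma>"
    using assms(1) by (rule permutes_bij)
  ultimately show ?thesis
    by (simp add: bij_is_inj bij_is_surj card_vimage_inj)
qed

lemma sum_MU_eq_sum_exposed_items:
  "(\<Sum>d\<in>{1..n}. MU k (\<sigma> d) * w d) = (\<Sum>d\<in>exposed_items n k \<sigma>. w d)"
  unfolding exposed_items_def sum.inter_filter[OF finite_atLeastAtMost]
  by (intro sum.cong) (simp_all add: MU_def)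

lemma sum_expected_exposure_weighted:
  "(\<Sum>d\<in>D. expected_exposure n k \<pi> d * w d)
     = (\<Sum>\<sigma>\<in>rankings n. \<pi> \<sigma> * (\<Sum>d\<in>D. MU k (\<sigma> d) * w d))"
  unfolding expected_exposure_def
  by (simp add: sum_distrib_left sum_distrib_right mult.assoc) (rule sum.swap)

lemma finite_rankings: "finite (rankings n)"
  by (simp add: rankings_def finite_permutations)

theorem theorem2:
  fixes n k m :: nat and U :: "nat set" and \<pi> :: "(nat \<Rightarrow> nat) \<Rightarrow> real"
  assumes "1 \<le> k" "k \<le> n" "1 \<le> m" "m < n"
    and "U \<subseteq> {1..n}" "card U = m"
    and "\<forall>\<sigma>\<in>rankings n. 0 \<le> \<pi> \<sigma>"
    and "(\<Sum>\<sigma>\<in>rankings n. \<pi> \<sigma>) = 1"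
  shows "0 \<le> (\<Sum>d\<in>{1..n}. expected_exposure n k \<pi> d * target_exposure n k U d)
       \<and> (\<Sum>d\<in>{1..n}. expected_exposure n k \<pi> d * target_exposure n k U d)
           \<le> (\<Sum>d\<in>{1..n}. (target_exposure n k U d)\<^sup>2)"
proof -
  let ?gain = "\<lambda>\<sigma>. \<Sum>d\<in>{1..n}. MU k (\<sigma> d) * target_exposure n k U d"
  let ?norm = "\<Sum>d\<in>{1..n}. (target_exposure n k U d)\<^sup>2"
  have "?gain \<sigma> \<in> {0..?norm}" if "\<sigma> \<in> rankings n" for \<sigma>
  proof -
    have "\<sigma> permutes {1..n}"
      using that by (simp add: rankings_def)
    then have "card (exposed_items n k \<sigma>) = k"
      using assms(2) by (rule card_exposed_items)
    from sum_target_exposure_bounds[OF assms(5) _ exposed_items_subset this] assms(4,6)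
    show ?thesis
      unfolding sum_MU_eq_sum_exposed_items by simp
  qed
  then have "(\<Sum>\<sigma>\<in>rankings n. \<pi> \<sigma> *\<^sub>R ?gain \<sigma>) \<in> {0..?norm}"
    using assms(7,8) by (intro convex_sum[OF finite_rankings convex_real_interval(5)]) auto
  then show ?thesis
    by (simp add: sum_expected_exposure_weighted)
qed

end
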